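(* Let $X$ be a real Banach space and $\psi:X\to\mathbb{R}$ a continuous convex function with $\psi(0)=0\le\psi(x)$ for all $x\in X$, which is not constant on any line. Let $C=\{x\in X:\psi(x)\le1\}$, and let $(x_n)_{n\in\mathbb{N}}\subset\partial C$ (the boundary of $C$) and $\xi_n\in\partial\psi(x_n)$ be such that $$X\setminus C=\bigcup_{n=1}^\infty\{y\in X:\langle\xi_n,y-x_n\rangle>0\}.$$ Then $\{\xi_n:n\in\mathbb{N}\}$ separates the points of $X$: for every $v\in X\setminus\{0\}$ there is $n$ with $\langle\xi_n,v\rangle\neq0$.
   Context: $\partial\psi(x)=\{\xi\in X^*:\psi(y)\ge\psi(x)+\langle\xi,y-x\rangle \text{ for all } y\in X\}$. "Not constant on any line" means there are no $x,v\in X$, $v\neq 0$, with $t\mapsto\psi(x+tv)$ constant on $\mathbb{R}$. *)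

theory Defs
  imports "HOL-Analysis.Analysis"
begin

text \<open>Subdifferential; elements of the dual space X* are represented as
  bounded linear functionals X \<Rightarrow> real.\<close>
definition subdiff :: "('a::real_normed_vector \<Rightarrow> real) \<Rightarrow> 'a \<Rightarrow> ('a \<Rightarrow> real) set" where
  "subdiff \<psi> x = {\<xi>. bounded_linear \<xi> \<and> (\<forall>y. \<psi> y \<ge> \<psi> x + \<xi> (y - x))}"

definition not_constant_on_any_line :: "('a::real_vector \<Rightarrow> real) \<Rightarrow> bool" where
  "not_constant_on_any_line \<psi> \<longleftrightarrow>
     \<not> (\<exists>x v. v \<noteq> 0 \<and> (\<forall>t::real. \<psi> (x + t *\<^sub>R v) = \<psi> x))"

end

theory Submission
  imports Defs
begin

(* If every \<xi>\<^sub>n vanished at some v \<noteq> 0, then moving along the line \<real>v never changes the sign of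
   any \<xi>\<^sub>n(y - x\<^sub>n), so the whole line through 0 \<in> C would stay inside C. But a convex function
   that is bounded above on a line is constant on it, contradicting the hypothesis that \<psi> is
   not constant on any line. *)

lemma convex_on_le_of_bounded_above_on_line:
  fixes f :: "'a::real_vector \<Rightarrow> real"
  assumes "convex_on UNIV f" and "\<And>t. f (x + t *\<^sub>R v) \<le> M"
  shows "f (x + s *\<^sub>R v) \<le> f x"
proof (rule ccontr)
  assume increase: "\<not> ?thesis"
  define d where "d = f (x + s *\<^sub>R v) - f x"
  have d_pos: "d > 0" using increase by (simp add: d_def)
  define k where "k = max 1 ((M - f x) / d + 1)"
  have k: "k \<ge> 1" "k * d > M - f x"
    using d_pos by (auto simp: k_def max_def field_simps split: if_splits)
  have "x + s *\<^sub>R v = (1 - 1/k) *\<^sub>R x + (1/k) *\<^sub>R (x + (k * s) *\<^sub>R v)"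
    using k(1) by (simp add: algebra_simps)
  hence "f (x + s *\<^sub>R v) \<le> (1 - 1/k) * f x + (1/k) * f (x + (k * s) *\<^sub>R v)"
    using convex_onD[OF assms(1), of "1/k" x "x + (k * s) *\<^sub>R v"] k(1) by simp
  also have "\<dots> \<le> (1 - 1/k) * f x + (1/k) * M"
    using assms(2)[of "k * s"] k(1) by (intro add_left_mono mult_left_mono) auto
  finally have "k * d \<le> M - f x"
    using k(1) by (simp add: d_def field_simps)
  with k(2) show False by simp
qed

lemma convex_on_const_of_bounded_above_on_line:
  fixes f :: "'a::real_vector \<Rightarrow> real"
  assumes "convex_on UNIV f" and "\<And>t. f (x + t *\<^sub>R v) \<le> M"
  shows "f (x + s *\<^sub>R v) = f x"
proof (rule antisym)
  show "f (x + s *\<^sub>R v) \<le> f x"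
    using convex_on_le_of_bounded_above_on_line[OF assms] .
  have "\<And>t. f ((x + s *\<^sub>R v) + t *\<^sub>R v) \<le> M"
    using assms(2) by (simp add: add.assoc flip: scaleR_add_left)
  from convex_on_le_of_bounded_above_on_line[OF assms(1) this, of "- s"]
  show "f x \<le> f (x + s *\<^sub>R v)" by simp
qed

lemma line_in_set_of_halfspace_cover_complement:
  assumes "\<And>n. linear (\<xi> n)"
    and "UNIV - S = (\<Union>n. {y. \<xi> n (y - x n) > 0})"
    and "a \<in> S" and "\<And>n. \<xi> n v = 0"
  shows "a + t *\<^sub>R v \<in> S"
proof (rule ccontr)
  assume "a + t *\<^sub>R v \<notin> S"
  then obtain n where "\<xi> n (a + t *\<^sub>R v - x n) > 0"
    using assms(2) by blast
  moreover have "\<xi> n (a + t *\<^sub>R v - x n) = \<xi> n (a - x n)"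
    using assms(1)[of n] assms(4)[of n]
    by (simp add: diff_add_eq[symmetric] linear_add linear_scale)
  ultimately have "a \<in> UNIV - S"
    using assms(2) by auto
  with assms(3) show False by simp
qed

theorem mainTheorem8:
  fixes \<psi> :: "'a::banach \<Rightarrow> real" and x :: "nat \<Rightarrow> 'a" and \<xi> :: "nat \<Rightarrow> 'a \<Rightarrow> real"
  assumes "continuous_on UNIV \<psi>" and "convex_on UNIV \<psi>"
    and "\<psi> 0 = 0" and "\<forall>y. 0 \<le> \<psi> y"
    and "not_constant_on_any_line \<psi>"
    and "\<forall>n. x n \<in> frontier {y. \<psi> y \<le> 1}"
    and "\<forall>n. \<xi> n \<in> subdiff \<psi> (x n)"
    and "UNIV - {y. \<psi> y \<le> 1} = (\<Union>n. {y. \<xi> n (y - x n) > 0})"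
  shows "\<forall>v. v \<noteq> 0 \<longrightarrow> (\<exists>n. \<xi> n v \<noteq> 0)"
proof (intro allI impI, rule ccontr)
  fix v :: 'a
  assume "v \<noteq> 0" and "\<not> (\<exists>n. \<xi> n v \<noteq> 0)"
  have "\<And>n. linear (\<xi> n)"
    using assms(7) by (simp add: subdiff_def bounded_linear.linear)
  from line_in_set_of_halfspace_cover_complement[OF this assms(8), of 0]
  have "\<And>t. \<psi> (0 + t *\<^sub>R v) \<le> 1"
    using assms(3) \<open>\<not> (\<exists>n. \<xi> n v \<noteq> 0)\<close> by auto
  from convex_on_const_of_bounded_above_on_line[OF assms(2) this]
  have "\<forall>t. \<psi> (0 + t *\<^sub>R v) = \<psi> 0" by blast
  with \<open>v \<noteq> 0\<close> assms(5) show False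
    unfolding not_constant_on_any_line_def by blast
qed

end
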